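(* Fix an integer $n\ge1$. For $r>0$, let $X_r$ be the systematic-Poisson process on $(0,1)$ with parameters $r$ and $\lambda=rn$. Then $X_r$ converges weakly (in distribution, as point processes) to the systematic process on $(0,1)$ with sampling interval $c=1/n$, i.e. the random set $\{u+k/n:\ k=0,\dots,n-1\}$ with $u\sim\mathcal U(0,1/n)$, as $r\to\infty$.
   Context: $\mathrm{Gamma}(r,\lambda)$ is the Gamma distribution with shape $r$ and rate $\lambda$. $\mathrm{ForG}(r,\lambda)$ is the distribution on $[0,\infty)$ with PDF $\lambda\,\Gamma(r,\lambda x)/\Gamma(r+1)$, where $\Gamma(r,y)=\int_y^\infty t^{r-1}e^{-t}dt$. The systematic-Poisson process with parameters $r>0,\lambda>0$: $x_1\sim\mathrm{ForG}(r,\lambda)$, $x_i=x_{i-1}+J_i$ for $i\ge2$ with $J_2,J_3,\dots$ i.i.d. $\mathrm{Gamma}(r,\lambda)$ independent of $x_1$; the sample is the set of those $x_i$ in $(0,1)$. Weak convergence of point processes is convergence in distribution of the random counting measures (equivalently, weak convergence of finite-dimensional distributions of counts). *)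

theory Defs
  imports "HOL-Probability.Probability"
begin

definition upper_gamma :: "real \<Rightarrow> real \<Rightarrow> real" where
  "upper_gamma r y = (LBINT t:{y..}. t powr (r - 1) * exp (- t))"

definition gamma_density :: "real \<Rightarrow> real \<Rightarrow> real \<Rightarrow> real" where
  "gamma_density r l x = (if x > 0 then l powr r * x powr (r - 1) * exp (- l * x) / Gamma r else 0)"

definition forG_density :: "real \<Rightarrow> real \<Rightarrow> real \<Rightarrow> real" where
  "forG_density r l x = (if x \<ge> 0 then l * upper_gamma r (l * x) / Gamma (r + 1) else 0)"

text \<open>Joint law of (x_1, J_2, J_3, ...): coordinate 0 is x_1, coordinate i >= 1 is J_(i+1).\<close>
definition sysPoisson_measure :: "real \<Rightarrow> real \<Rightarrow> (nat \<Rightarrow> real) measure" where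
  "sysPoisson_measure r l =
     PiM UNIV (\<lambda>i. if i = 0 then density lborel (\<lambda>x. ennreal (forG_density r l x))
                   else density lborel (\<lambda>x. ennreal (gamma_density r l x)))"

definition sysPoisson_points :: "(nat \<Rightarrow> real) \<Rightarrow> real set" where
  "sysPoisson_points \<omega> = {x. \<exists>i. x = (\<Sum>j\<le>i. \<omega> j)} \<inter> {0<..<1}"

definition systematic_measure :: "nat \<Rightarrow> real measure" where
  "systematic_measure n = uniform_measure lborel {0<..<1 / real n}"

definition systematic_points :: "nat \<Rightarrow> real \<Rightarrow> real set" where
  "systematic_points n u = {u + real k / real n | k. k < n}"

text \<open>Weak convergence of point processes on (0,1), expressed through convergence of the
  finite-dimensional distributions of counts N(A_1),...,N(A_m) for Borel sets A_j in (0,1)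
  that are continuity sets of the limit process (a.s. no limit point on the boundary of A_j).
  Since counts are nat-valued, convergence in distribution of the count vector is
  convergence of all point probabilities.  A point process is given by a probability
  space M and a map P sending an outcome to its (finite) point set; N(A) = card (P w \<inter> A).\<close>
definition pp_weak_conv ::
  "'i filter \<Rightarrow> ('i \<Rightarrow> 'a measure) \<Rightarrow> ('i \<Rightarrow> 'a \<Rightarrow> real set) \<Rightarrow> 'b measure \<Rightarrow> ('b \<Rightarrow> real set) \<Rightarrow> bool"
  where
  "pp_weak_conv F M P L Q \<longleftrightarrow>
    (\<forall>(As :: real set list) (ks :: nat list).
       length ks = length As \<longrightarrow>
       (\<forall>A\<in>set As. A \<in> sets borel \<and> A \<subseteq> {0<..<1} \<and>
                   measure L {w \<in> space L. Q w \<inter> frontier A \<noteq> {}} = 0) \<longrightarrow>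
       ((\<lambda>i. measure (M i) {w \<in> space (M i). \<forall>j<length As. card (P i w \<inter> As ! j) = ks ! j})
         \<longlongrightarrow> measure L {w \<in> space L. \<forall>j<length As. card (Q w \<inter> As ! j) = ks ! j}) F)"

end

theory Submission
  imports Defs "HOL-Real_Asymp.Real_Asymp"
begin

text \<open>
  With rate l = r n the jumps J ~ Gamma(r, r n) have mean 1/n and variance 1/(r n^2), so by
  Chebyshev the n jumps following x_1 are all within delta/n of 1/n with probability tending
  to 1.  The ForG(r, r n) density equals n P(J >= x), which tends to n on (0, 1/n) and to 0
  beyond 1/n; by Scheffe's lemma x_1 converges setwise to U(0, 1/n).  If x_1 = u lies in the
  set of starts whose systematic points u + k/n stay delta away from 0, 1 and the boundaries
  of the test sets, then the points x_1, ..., x_n are within delta of u + k/n, all later points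
  exceed 1, and every count agrees with the systematic one.  Because the test sets are
  continuity sets of the limit, these safe starts have limit probability close to 1 for small
  delta.\<close>

section \<open>Gamma and ForG densities\<close>

abbreviation gamma_measure :: "real \<Rightarrow> real \<Rightarrow> real measure" where
  "gamma_measure r l \<equiv> density lborel (\<lambda>x. ennreal (gamma_density r l x))"

abbreviation forG_measure :: "real \<Rightarrow> real \<Rightarrow> real measure" where
  "forG_measure r l \<equiv> density lborel (\<lambda>x. ennreal (forG_density r l x))"

lemma measure_density_eq_integral:
  fixes f :: "'a \<Rightarrow> real"
  assumes "integrable M f" "\<And>x. 0 \<le> f x" "A \<in> sets M"
  shows "measure (density M (\<lambda>x. ennreal (f x))) A = (\<integral>x. f x * indicator A x \<partial>M)"
proof -
  have "emeasure (density M (\<lambda>x. ennreal (f x))) A = (\<integral>\<^sup>+x. ennreal (f x * indicator A x) \<partial>M)"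
    using assms by (subst emeasure_density) (auto intro!: nn_integral_cong split: split_indicator)
  also have "\<dots> = ennreal (\<integral>x. f x * indicator A x \<partial>M)"
    using assms by (intro nn_integral_eq_integral integrable_real_mult_indicator) auto
  finally show ?thesis
    using assms by (simp add: measure_def integral_nonneg)
qed

lemma nn_integral_powr_exp_scaled:
  fixes a l :: real
  assumes a: "a > 0" and l: "l > 0"
  shows "(\<integral>\<^sup>+x. ennreal (indicator {0<..} x * x powr (a - 1) * exp (- l * x)) \<partial>lborel)
         = ennreal (Gamma a / l powr a)"
proof -
  have "(\<integral>\<^sup>+x. ennreal (indicator {0<..} x * x powr (a - 1) * exp (- l * x)) \<partial>lborel)
      = \<bar>1/l\<bar> * (\<integral>\<^sup>+x. ennreal (indicator {0<..} (0 + 1/l * x) * (0 + 1/l * x) powr (a - 1)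
                                      * exp (- l * (0 + 1/l * x))) \<partial>lborel)"
    by (rule nn_integral_real_affine) (use l in auto)
  also have "(\<lambda>x. ennreal (indicator {0<..} (0 + 1/l * x) * (0 + 1/l * x) powr (a - 1) * exp (- l * (0 + 1/l * x))))
      = (\<lambda>x. ennreal (l powr (1 - a)) * ennreal (indicator {0..} x * x powr (a - 1) / exp x))"
  proof
    fix x :: real
    have "(1/l * x) powr (a - 1) = l powr (1 - a) * x powr (a - 1)" if "x > 0"
      using that l by (simp add: powr_divide powr_minus_divide[symmetric] powr_diff field_simps)
    then show "ennreal (indicator {0<..} (0 + 1/l * x) * (0 + 1/l * x) powr (a - 1) * exp (- l * (0 + 1/l * x)))
      = ennreal (l powr (1 - a)) * ennreal (indicator {0..} x * x powr (a - 1) / exp x)"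
      using l by (cases "x > 0")
        (auto simp: ennreal_mult'[symmetric] exp_minus field_simps indicator_def zero_less_mult_iff)
  qed
  also have "(\<integral>\<^sup>+x. ennreal (l powr (1 - a)) * ennreal (indicator {0..} x * x powr (a - 1) / exp x) \<partial>lborel)
      = ennreal (l powr (1 - a)) * ennreal (Gamma a)"
    by (subst nn_integral_cmult) (auto simp: Gamma_conv_nn_integral_real[OF a])
  finally show ?thesis
    using l a by (simp add: ennreal_mult'[symmetric] powr_diff field_simps Gamma_real_pos)
qed

lemma gamma_density_nonneg: "r > 0 \<Longrightarrow> 0 \<le> gamma_density r l x"
  by (simp add: gamma_density_def Gamma_real_pos)

lemma gamma_density_eq_0: "x \<le> 0 \<Longrightarrow> gamma_density r l x = 0"
  by (simp add: gamma_density_def)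

lemma borel_measurable_gamma_density[measurable]: "gamma_density r l \<in> borel_measurable borel"
  unfolding gamma_density_def by measurable

lemma nn_integral_gamma_density_power:
  fixes r l :: real and k :: nat
  assumes r: "r > 0" and l: "l > 0"
  shows "(\<integral>\<^sup>+x. ennreal (gamma_density r l x * x ^ k) \<partial>lborel) = ennreal (Gamma (r + k) / (Gamma r * l ^ k))"
proof -
  have eq: "ennreal (gamma_density r l x * x ^ k)
     = ennreal (l powr r / Gamma r) * ennreal (indicator {0<..} x * x powr (r + k - 1) * exp (- l * x))" for x
  proof (cases "x > 0")
    case True
    have "x powr (r + k - 1) = x powr (r - 1) * x powr k"
      by (simp add: powr_add[symmetric] diff_add_eq)
    then have "x powr (r - 1) * x ^ k = x powr (r + k - 1)"
      using True by (simp add: powr_realpow)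
    then show ?thesis
      using True r l by (simp add: gamma_density_def ennreal_mult'[symmetric] Gamma_real_pos field_simps)
  qed (simp add: gamma_density_def)
  have "(\<integral>\<^sup>+x. ennreal (gamma_density r l x * x ^ k) \<partial>lborel)
      = ennreal (l powr r / Gamma r)
        * (\<integral>\<^sup>+x. ennreal (indicator {0<..} x * x powr (r + k - 1) * exp (- l * x)) \<partial>lborel)"
    unfolding eq by (rule nn_integral_cmult) measurable
  also have "\<dots> = ennreal (l powr r / Gamma r) * ennreal (Gamma (r + k) / l powr (r + k))"
    using r l by (subst nn_integral_powr_exp_scaled) auto
  also have "\<dots> = ennreal (Gamma (r + k) / (Gamma r * l ^ k))"
    using r l by (simp add: ennreal_mult'[symmetric] Gamma_real_pos powr_add powr_realpow field_simps)
  finally show ?thesis .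
qed

lemma prob_space_gamma_measure:
  assumes "r > 0" "l > 0"
  shows "prob_space (gamma_measure r l)"
  using nn_integral_gamma_density_power[OF assms, of 0] Gamma_real_pos[OF assms(1)]
  by (intro prob_spaceI) (simp add: emeasure_density)

lemma gamma_density_power_nonneg: "r > 0 \<Longrightarrow> 0 \<le> gamma_density r l x * x ^ k"
  using gamma_density_nonneg[of r l x] by (cases "x > 0") (auto simp: gamma_density_eq_0)

lemma integrable_gamma_density_power:
  assumes "r > 0" "l > 0"
  shows "integrable lborel (\<lambda>x. gamma_density r l x * x ^ k)"
  using gamma_density_power_nonneg[OF assms(1)] nn_integral_gamma_density_power[OF assms, of k]
  by (intro integrableI_nonneg) auto

lemma gamma_measure_power:
  fixes k :: nat
  assumes r: "r > 0" and l: "l > 0"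
  shows "integrable (gamma_measure r l) (\<lambda>x. x ^ k)"
    and "(\<integral>x. x ^ k \<partial>gamma_measure r l) = Gamma (r + k) / (Gamma r * l ^ k)"
proof -
  note nonneg = gamma_density_power_nonneg[OF r]
  note int = integrable_gamma_density_power[OF r l, of k]
  show "integrable (gamma_measure r l) (\<lambda>x. x ^ k)"
    using int gamma_density_nonneg[OF r] by (subst integrable_density) auto
  have "(\<integral>x. x ^ k \<partial>gamma_measure r l) = (\<integral>x. gamma_density r l x * x ^ k \<partial>lborel)"
    using gamma_density_nonneg[OF r] by (subst integral_density) auto
  also have "\<dots> = Gamma (r + k) / (Gamma r * l ^ k)"
    using int nonneg r l
    by (simp add: integral_eq_nn_integral nn_integral_gamma_density_power Gamma_real_pos)
  finally show "(\<integral>x. x ^ k \<partial>gamma_measure r l) = Gamma (r + k) / (Gamma r * l ^ k)" .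
qed

lemma Gamma_plus1_pos: "(r::real) > 0 \<Longrightarrow> Gamma (r + 1) = r * Gamma r"
  by (rule Gamma_plus1) (auto dest: nonpos_Ints_nonpos)

text \<open>Chebyshev's inequality, with mean \<open>r / l\<close> and variance \<open>r / l\<^sup>2\<close>.\<close>
lemma gamma_measure_deviation:
  assumes r: "r > 0" and l: "l > 0" and \<eta>: "\<eta> > 0"
  shows "measure (gamma_measure r l) {x. \<eta> \<le> \<bar>x - r / l\<bar>} \<le> r / (l\<^sup>2 * \<eta>\<^sup>2)"
proof -
  interpret prob_space "gamma_measure r l" by (rule prob_space_gamma_measure[OF r l])
  have G2: "Gamma (r + 2) = (r + 1) * r * Gamma r"
    using Gamma_plus1_pos[of "r + 1"] Gamma_plus1_pos[OF r] r by (simp add: add.assoc)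
  have mean: "expectation (\<lambda>x. x) = r / l"
    using gamma_measure_power(2)[OF r l, of 1] Gamma_plus1_pos[OF r] Gamma_real_pos[OF r] by simp
  have square: "expectation (\<lambda>x. x\<^sup>2) = (r + 1) * r / l\<^sup>2"
    using gamma_measure_power(2)[OF r l, of 2] G2 Gamma_real_pos[OF r] by simp
  have "variance (\<lambda>x. x) = expectation (\<lambda>x. x\<^sup>2) - (expectation (\<lambda>x. x))\<^sup>2"
    using gamma_measure_power(1)[OF r l, of 1] gamma_measure_power(1)[OF r l, of 2] by (intro variance_eq) auto
  then have var: "variance (\<lambda>x. x) = r / l\<^sup>2"
    unfolding square mean using l by (simp add: field_simps power2_eq_square)
  have "prob {x \<in> space (gamma_measure r l). \<eta> \<le> \<bar>x - expectation (\<lambda>x. x)\<bar>} \<le> variance (\<lambda>x. x) / \<eta>\<^sup>2"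
    using gamma_measure_power(1)[OF r l, of 2] \<eta> by (intro Chebyshev_inequality) auto
  then show ?thesis
    using var by (simp add: mean)
qed

lemma gamma_measure_concentration:
  assumes c: "c > 0" and \<eta>: "\<eta> > 0"
  shows "((\<lambda>r. measure (gamma_measure r (r * c)) {x. \<eta> \<le> \<bar>x - 1 / c\<bar>}) \<longlongrightarrow> 0) at_top"
proof (rule tendsto_sandwich)
  show "eventually (\<lambda>r. 0 \<le> measure (gamma_measure r (r * c)) {x. \<eta> \<le> \<bar>x - 1 / c\<bar>}) at_top"
    by simp
  show "eventually (\<lambda>r. measure (gamma_measure r (r * c)) {x. \<eta> \<le> \<bar>x - 1 / c\<bar>} \<le> 1 / (r * (c * \<eta>)\<^sup>2)) at_top"
    using eventually_gt_at_top[of 0]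
  proof eventually_elim
    case (elim r)
    then show ?case
      using gamma_measure_deviation[of r "r * c" \<eta>] c \<eta> by (simp add: power2_eq_square field_simps)
  qed
  show "((\<lambda>r. 1 / (r * (c * \<eta>)\<^sup>2)) \<longlongrightarrow> 0) at_top"
    using c \<eta> by real_asymp
qed simp

lemma measure_gamma_measure:
  assumes "r > 0" "l > 0" "A \<in> sets borel"
  shows "measure (gamma_measure r l) A = (\<integral>s. gamma_density r l s * indicator A s \<partial>lborel)"
  using integrable_gamma_density_power[OF assms(1,2), of 0] gamma_density_nonneg[OF assms(1)] assms(3)
  by (intro measure_density_eq_integral) auto

lemma upper_gamma_eq_gamma_tail:
  assumes r: "r > 0" and l: "l > 0" and x: "0 \<le> x"
  shows "upper_gamma r (l * x) = Gamma r * measure (gamma_measure r l) {x..}"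
proof -
  have "upper_gamma r (l * x) = (\<integral>t. indicator {l * x..} t * (t powr (r - 1) * exp (- t)) \<partial>lborel)"
    by (simp add: upper_gamma_def set_lebesgue_integral_def)
  also have "\<dots> = l * (\<integral>s. indicator {l * x..} (l * s) * ((l * s) powr (r - 1) * exp (- (l * s))) \<partial>lborel)"
    using lborel_integral_real_affine[of l "\<lambda>t. indicator {l * x..} t * (t powr (r - 1) * exp (- t))" 0] l
    by simp
  also have "\<dots> = (\<integral>s. l * (indicator {l * x..} (l * s) * ((l * s) powr (r - 1) * exp (- (l * s)))) \<partial>lborel)"
    by (rule integral_mult_right_zero[symmetric])
  also have "\<dots> = (\<integral>s. Gamma r * (gamma_density r l s * indicator {x..} s) \<partial>lborel)"
  proof (rule Bochner_Integration.integral_cong[OF refl])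
    fix s :: real
    show "l * (indicator {l * x..} (l * s) * ((l * s) powr (r - 1) * exp (- (l * s))))
        = Gamma r * (gamma_density r l s * indicator {x..} s)"
    proof (cases "s > 0")
      case True
      have "l * (l * s) powr (r - 1) = l powr r * s powr (r - 1)"
        using l True by (simp add: powr_mult powr_diff field_simps)
      then show ?thesis
        using True l Gamma_real_pos[OF r] by (simp add: gamma_density_def indicator_def field_simps)
    next
      case False
      then show ?thesis
        using l x by (auto simp: gamma_density_eq_0 indicator_def mult_le_cancel_left_pos)
    qed
  qed
  also have "\<dots> = Gamma r * measure (gamma_measure r l) {x..}"
    using r l by (simp add: measure_gamma_measure)
  finally show ?thesis .
qed

lemma forG_density_eq_tail:
  assumes "r > 0" "l > 0"
  shows "forG_density r l x = (if 0 \<le> x then l / r * measure (gamma_measure r l) {x..} else 0)"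
proof -
  have "Gamma r \<noteq> 0"
    using Gamma_real_pos[OF assms(1)] by simp
  then show ?thesis
    using assms by (simp add: forG_density_def upper_gamma_eq_gamma_tail Gamma_plus1_pos)
qed

lemma forG_density_nonneg: "r > 0 \<Longrightarrow> l > 0 \<Longrightarrow> 0 \<le> forG_density r l x"
  by (simp add: forG_density_eq_tail)

lemma borel_measurable_measure_atLeast:
  fixes M :: "real measure"
  assumes "finite_measure M" "sets M = sets borel"
  shows "(\<lambda>x. measure M {x..}) \<in> borel_measurable borel"
proof -
  have "mono (\<lambda>x. - measure M {x..})"
    using assms by (intro monoI) (simp add: finite_measure.finite_measure_mono)
  then have "(\<lambda>x. - measure M {x..}) \<in> borel_measurable borel"
    by (rule borel_measurable_mono)
  then show ?thesis
    using borel_measurable_uminus_eq by blast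
qed

lemma borel_measurable_gamma_tail[measurable]:
  assumes "r > 0" "l > 0"
  shows "(\<lambda>x. measure (gamma_measure r l) {x..}) \<in> borel_measurable borel"
proof -
  interpret prob_space "gamma_measure r l" by (rule prob_space_gamma_measure[OF assms])
  show ?thesis
    by (intro borel_measurable_measure_atLeast finite_measure_axioms) simp
qed

lemma borel_measurable_forG_density[measurable]:
  assumes "r > 0" "l > 0"
  shows "forG_density r l \<in> borel_measurable borel"
proof -
  note borel_measurable_gamma_tail[OF assms, measurable]
  have "forG_density r l = (\<lambda>x. if 0 \<le> x then l / r * measure (gamma_measure r l) {x..} else 0)"
    using forG_density_eq_tail[OF assms] by (intro ext) simp
  then show ?thesis
    by simp
qed

lemma nn_integral_emeasure_atLeast:
  fixes M :: "real measure"
  assumes "sigma_finite_measure M" and [measurable_cong]: "sets M = sets borel"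
  shows "(\<integral>\<^sup>+x. emeasure M {x..} * indicator {0..} x \<partial>lborel) = (\<integral>\<^sup>+s. ennreal s \<partial>M)"
proof -
  interpret pair_sigma_finite lborel M
    using assms(1) by (intro pair_sigma_finite.intro) (auto simp: lborel.sigma_finite_measure_axioms)
  define f :: "real \<Rightarrow> real \<Rightarrow> ennreal" where "f x s = (if 0 \<le> x \<and> x \<le> s then 1 else 0)" for x s
  have [measurable]: "case_prod f \<in> borel_measurable (lborel \<Otimes>\<^sub>M M)"
    unfolding f_def split_beta' by measurable
  have "f x s = indicator {x..} s * indicator {0..} x" for x s
    by (auto simp: f_def indicator_def)
  then have "(\<integral>\<^sup>+x. emeasure M {x..} * indicator {0..} x \<partial>lborel) = (\<integral>\<^sup>+x. \<integral>\<^sup>+s. f x s \<partial>M \<partial>lborel)"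
    using assms(2) by (simp add: nn_integral_multc)
  also have "\<dots> = (\<integral>\<^sup>+s. \<integral>\<^sup>+x. f x s \<partial>lborel \<partial>M)"
    by (rule Fubini'[symmetric]) measurable
  also have "\<dots> = (\<integral>\<^sup>+s. ennreal s \<partial>M)"
  proof (intro nn_integral_cong)
    fix s :: real
    have "(\<lambda>x. f x s) = indicator {0..s}"
      by (auto simp: f_def indicator_def)
    then have "(\<integral>\<^sup>+x. f x s \<partial>lborel) = emeasure lborel {0..s}"
      by simp
    then show "(\<integral>\<^sup>+x. f x s \<partial>lborel) = ennreal s"
      by (cases "0 \<le> s") (auto simp: ennreal_neg)
  qed
  finally show ?thesis .
qed

lemma prob_space_forG_measure:
  assumes r: "r > 0" and l: "l > 0"
  shows "prob_space (forG_measure r l)"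
proof (rule prob_spaceI)
  interpret prob_space "gamma_measure r l" by (rule prob_space_gamma_measure[OF r l])
  have "(\<integral>\<^sup>+s. ennreal s \<partial>gamma_measure r l) = (\<integral>\<^sup>+s. ennreal (gamma_density r l s * s ^ 1) \<partial>lborel)"
    using gamma_density_nonneg[OF r]
    by (subst nn_integral_density) (auto intro!: nn_integral_cong simp: ennreal_mult'[symmetric] ennreal_neg gamma_density_eq_0)
  also have "\<dots> = ennreal (r / l)"
    using nn_integral_gamma_density_power[OF r l, of 1] Gamma_real_pos[OF r] r by (simp add: Gamma_plus1_pos)
  finally have mean: "(\<integral>\<^sup>+s. ennreal s \<partial>gamma_measure r l) = ennreal (r / l)" .
  note borel_measurable_forG_density[OF r l, measurable]
  have "emeasure (forG_measure r l) (space (forG_measure r l)) = (\<integral>\<^sup>+x. ennreal (forG_density r l x) \<partial>lborel)"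
    by (subst emeasure_density) auto
  also have "\<dots> = (\<integral>\<^sup>+x. ennreal (l / r) * (emeasure (gamma_measure r l) {x..} * indicator {0..} x) \<partial>lborel)"
  proof (intro nn_integral_cong)
    fix x :: real
    have "ennreal (l / r * measure (gamma_measure r l) {x..})
        = ennreal (l / r) * emeasure (gamma_measure r l) {x..}"
      using r l by (simp add: ennreal_mult[symmetric] emeasure_eq_measure del: times_divide_eq_left)
    then show "ennreal (forG_density r l x) = ennreal (l / r) * (emeasure (gamma_measure r l) {x..} * indicator {0..} x)"
      using r l by (simp add: forG_density_eq_tail indicator_def)
  qed
  also have "\<dots> = ennreal (l / r) * (\<integral>\<^sup>+x. emeasure (gamma_measure r l) {x..} * indicator {0..} x \<partial>lborel)"
    using borel_measurable_gamma_tail[OF r l]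
    by (intro nn_integral_cmult) (simp add: emeasure_eq_measure)
  also have "\<dots> = ennreal (l / r) * ennreal (r / l)"
    by (simp add: nn_integral_emeasure_atLeast sigma_finite_measure_axioms mean)
  also have "\<dots> = 1"
    using r l by (simp flip: ennreal_mult)
  finally show "emeasure (forG_measure r l) (space (forG_measure r l)) = 1" .
qed

section \<open>Setwise convergence of the first point\<close>

lemma abs_measure_density_diff_le:
  fixes F f :: "'a \<Rightarrow> real"
  assumes int: "integrable M F" "integrable M f" and nonneg: "\<And>x. 0 \<le> F x" "\<And>x. 0 \<le> f x"
    and A: "A \<in> sets M"
  shows "\<bar>measure (density M (\<lambda>x. ennreal (F x))) A - measure (density M (\<lambda>x. ennreal (f x))) A\<bar>
    \<le> (\<integral>x. \<bar>F x - f x\<bar> \<partial>M)"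
proof -
  have "measure (density M (\<lambda>x. ennreal (F x))) A - measure (density M (\<lambda>x. ennreal (f x))) A
      = (\<integral>x. F x * indicator A x \<partial>M) - (\<integral>x. f x * indicator A x \<partial>M)"
    using int nonneg A by (simp add: measure_density_eq_integral)
  also have "\<dots> = (\<integral>x. (F x - f x) * indicator A x \<partial>M)"
    using int A by (simp add: left_diff_distrib Bochner_Integration.integral_diff integrable_real_mult_indicator)
  finally have "\<bar>measure (density M (\<lambda>x. ennreal (F x))) A - measure (density M (\<lambda>x. ennreal (f x))) A\<bar>
      \<le> (\<integral>x. \<bar>(F x - f x) * indicator A x\<bar> \<partial>M)"
    using integral_norm_bound[of M "\<lambda>x. (F x - f x) * indicator A x"] by simp
  also have "\<dots> \<le> (\<integral>x. \<bar>F x - f x\<bar> \<partial>M)"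
    using int A
    by (intro integral_mono integrable_abs integrable_real_mult_indicator Bochner_Integration.integrable_diff)
       (simp_all add: abs_mult indicator_def)
  finally show ?thesis .
qed

lemma tendsto_measure_density_Scheffe:
  fixes F :: "nat \<Rightarrow> 'a \<Rightarrow> real" and f :: "'a \<Rightarrow> real"
  assumes [measurable]: "\<And>n. F n \<in> borel_measurable M" "f \<in> borel_measurable M"
    and F_nonneg: "\<And>n x. 0 \<le> F n x" and f_nonneg: "\<And>x. 0 \<le> f x"
    and F_prob: "\<And>n. prob_space (density M (\<lambda>x. ennreal (F n x)))"
    and f_prob: "prob_space (density M (\<lambda>x. ennreal (f x)))"
    and conv: "AE x in M. (\<lambda>n. F n x) \<longlonglongrightarrow> f x"
    and A: "A \<in> sets M"
  shows "(\<lambda>n. measure (density M (\<lambda>x. ennreal (F n x))) A) \<longlonglongrightarrow> measure (density M (\<lambda>x. ennreal (f x))) A"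
proof -
  have mass: "(\<integral>\<^sup>+x. ennreal (g x) \<partial>M) = 1"
    if "prob_space (density M (\<lambda>x. ennreal (g x)))" "g \<in> borel_measurable M" for g
    using prob_space.emeasure_space_1[OF that(1)] that(2) by (simp add: emeasure_density)
  have int_F: "integrable M (F n)" for n
    using mass[OF F_prob assms(1)] F_nonneg by (intro integrableI_nonneg) auto
  have int_f: "integrable M f"
    using mass[OF f_prob assms(2)] f_nonneg by (intro integrableI_nonneg) auto
  have "(\<lambda>n. \<integral>\<^sup>+x. norm (F n x - f x) \<partial>M) \<longlonglongrightarrow> 0"
    using mass[OF F_prob assms(1)] mass[OF f_prob assms(2)] F_nonneg f_nonneg
    by (intro Scheffe_lemma2 int_f conv) auto
  moreover have "(\<integral>x. \<bar>F n x - f x\<bar> \<partial>M) = enn2real (\<integral>\<^sup>+x. norm (F n x - f x) \<partial>M)" for n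
    by (simp add: integral_eq_nn_integral)
  ultimately have lim: "(\<lambda>n. \<integral>x. \<bar>F n x - f x\<bar> \<partial>M) \<longlonglongrightarrow> 0"
    using tendsto_enn2real[of _ 0 sequentially] by simp
  have "\<forall>n. norm (measure (density M (\<lambda>x. ennreal (F n x))) A - measure (density M (\<lambda>x. ennreal (f x))) A)
      \<le> (\<integral>x. \<bar>F n x - f x\<bar> \<partial>M)"
    using abs_measure_density_diff_le[OF int_F int_f F_nonneg f_nonneg A] by simp
  then have "(\<lambda>n. measure (density M (\<lambda>x. ennreal (F n x))) A - measure (density M (\<lambda>x. ennreal (f x))) A)
      \<longlonglongrightarrow> 0"
    by (rule Lim_null_comparison[OF always_eventually lim])
  then show ?thesis
    by (rule LIM_zero_cancel)
qed

lemma gamma_tail_tendsto_1: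
  assumes c: "c > 0" and x: "x < 1 / c"
  shows "((\<lambda>r. measure (gamma_measure r (r * c)) {x..}) \<longlongrightarrow> 1) at_top"
proof -
  define D where "D r = measure (gamma_measure r (r * c)) {y. 1 / c - x \<le> \<bar>y - 1 / c\<bar>}" for r
  have "((\<lambda>r. 1 - D r) \<longlongrightarrow> 1 - 0) at_top"
    unfolding D_def using x c by (intro tendsto_diff tendsto_const gamma_measure_concentration) auto
  then have lim: "((\<lambda>r. 1 - D r) \<longlongrightarrow> 1) at_top"
    by simp
  have bounds: "eventually (\<lambda>r. 1 - D r \<le> measure (gamma_measure r (r * c)) {x..}
      \<and> measure (gamma_measure r (r * c)) {x..} \<le> 1) at_top"
    using eventually_gt_at_top[of 0]
  proof eventually_elim
    case (elim r)
    interpret prob_space "gamma_measure r (r * c)"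
      using elim c by (intro prob_space_gamma_measure) auto
    have "1 - D r \<le> 1 - prob {..<x}"
      unfolding D_def by (intro diff_left_mono finite_measure_mono) auto
    also have "\<dots> = prob {x..}"
      using prob_compl[of "{..<x}"] by (simp add: Compl_eq_Diff_UNIV[symmetric] not_less)
    finally show ?case
      by simp
  qed
  show ?thesis
    by (rule tendsto_sandwich[OF _ _ lim tendsto_const]) (use bounds in \<open>auto elim: eventually_mono\<close>)
qed

lemma gamma_tail_tendsto_0:
  assumes c: "c > 0" and x: "1 / c < x"
  shows "((\<lambda>r. measure (gamma_measure r (r * c)) {x..}) \<longlongrightarrow> 0) at_top"
proof -
  have lim: "((\<lambda>r. measure (gamma_measure r (r * c)) {y. x - 1 / c \<le> \<bar>y - 1 / c\<bar>}) \<longlongrightarrow> 0) at_top"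
    using x c by (intro gamma_measure_concentration) auto
  have bound: "eventually (\<lambda>r. measure (gamma_measure r (r * c)) {x..}
      \<le> measure (gamma_measure r (r * c)) {y. x - 1 / c \<le> \<bar>y - 1 / c\<bar>}) at_top"
    using eventually_gt_at_top[of 0]
  proof eventually_elim
    case (elim r)
    interpret prob_space "gamma_measure r (r * c)"
      using elim c by (intro prob_space_gamma_measure) auto
    show ?case
      using x by (intro finite_measure_mono) auto
  qed
  show ?thesis
    by (rule tendsto_sandwich[OF _ bound tendsto_const lim]) simp
qed

lemma forG_density_tendsto:
  assumes c: "c > 0" and x: "x \<noteq> 0" "x \<noteq> 1 / c"
  shows "((\<lambda>r. forG_density r (r * c) x) \<longlongrightarrow> c * indicator {0<..<1 / c} x) at_top"
proof -
  have "((\<lambda>r. if 0 \<le> x then measure (gamma_measure r (r * c)) {x..} else 0) \<longlongrightarrow> indicator {0<..<1 / c} x) at_top"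
  proof (cases "0 \<le> x")
    case True
    then show ?thesis
      using x gamma_tail_tendsto_1[OF c, of x] gamma_tail_tendsto_0[OF c, of x] by (auto simp: indicator_def)
  qed simp
  then have "((\<lambda>r. c * (if 0 \<le> x then measure (gamma_measure r (r * c)) {x..} else 0))
      \<longlongrightarrow> c * indicator {0<..<1 / c} x) at_top"
    by (rule tendsto_mult_left)
  moreover have "eventually (\<lambda>r. c * (if 0 \<le> x then measure (gamma_measure r (r * c)) {x..} else 0)
      = forG_density r (r * c) x) at_top"
    using eventually_gt_at_top[of 0] by eventually_elim (use c in \<open>simp add: forG_density_eq_tail\<close>)
  ultimately show ?thesis
    by (rule Lim_transform_eventually)
qed

lemma uniform_measure_eq_density:
  assumes c: "c > 0"
  shows "uniform_measure lborel {0<..<1 / c} = density lborel (\<lambda>x. ennreal (c * indicator {0<..<1 / c} x))"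
  unfolding uniform_measure_def
  using c divide_ennreal[of 1 "1 / c"]
  by (intro arg_cong[where f = "density lborel"] ext) (simp add: indicator_def)

lemma tendsto_forG_measure_uniform:
  assumes c: "c > 0" and C: "C \<in> sets borel"
  shows "((\<lambda>r. measure (forG_measure r (r * c)) C) \<longlongrightarrow> measure (uniform_measure lborel {0<..<1 / c}) C) at_top"
proof (rule tendsto_at_topI_sequentially)
  fix X :: "nat \<Rightarrow> real"
  assume X: "filterlim X at_top sequentially"
  define Y where "Y k = max 1 (X k)" for k
  have Y: "filterlim Y at_top sequentially"
    using X by (rule filterlim_at_top_mono) (simp add: Y_def)
  have Y_pos: "Y k > 0" for k
    by (simp add: Y_def)
  have "(\<lambda>k. measure (forG_measure (Y k) (Y k * c)) C)
      \<longlonglongrightarrow> measure (density lborel (\<lambda>x. ennreal (c * indicator {0<..<1 / c} x))) C"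
  proof (rule tendsto_measure_density_Scheffe)
    show "prob_space (forG_measure (Y k) (Y k * c))" for k
      using Y_pos c by (intro prob_space_forG_measure) auto
    show "prob_space (density lborel (\<lambda>x. ennreal (c * indicator {0<..<1 / c} x)))"
      using c by (simp flip: uniform_measure_eq_density add: prob_space_uniform_measure)
    have "AE x in lborel. x \<noteq> 0 \<and> x \<noteq> 1 / c"
      using AE_lborel_singleton[of 0] AE_lborel_singleton[of "1 / c"] by eventually_elim simp
    then show "AE x in lborel. (\<lambda>k. forG_density (Y k) (Y k * c) x) \<longlonglongrightarrow> c * indicator {0<..<1 / c} x"
      by eventually_elim (use c in \<open>auto intro: filterlim_compose[OF forG_density_tendsto Y]\<close>)
    show "forG_density (Y k) (Y k * c) \<in> borel_measurable lborel" for k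
      using Y_pos c by simp
    show "0 \<le> forG_density (Y k) (Y k * c) x" for k x
      using Y_pos c by (simp add: forG_density_nonneg)
  qed (use c C in auto)
  moreover have "eventually (\<lambda>k. measure (forG_measure (Y k) (Y k * c)) C = measure (forG_measure (X k) (X k * c)) C)
      sequentially"
    using filterlim_at_top_dense[THEN iffD1, OF X, rule_format, of 1] by eventually_elim (simp add: Y_def)
  ultimately show "(\<lambda>k. measure (forG_measure (X k) (X k * c)) C)
      \<longlonglongrightarrow> measure (uniform_measure lborel {0<..<1 / c}) C"
    unfolding uniform_measure_eq_density[OF c] by (rule Lim_transform_eventually)
qed

section \<open>Comparison with the systematic sample\<close>

lemma card_image_Int_eq:
  assumes "inj_on f I"
  shows "card (f ` I \<inter> A) = card {i \<in> I. f i \<in> A}"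
proof -
  have "f ` I \<inter> A = f ` {i \<in> I. f i \<in> A}"
    by auto
  then show ?thesis
    using inj_on_subset[OF assms, of "{i \<in> I. f i \<in> A}"] by (simp add: card_image)
qed

lemma mem_iff_mem_if_ball_Int_frontier_empty:
  fixes p q :: "'a::real_normed_vector"
  assumes "ball p \<delta> \<inter> frontier A = {}" and "q \<in> ball p \<delta>"
  shows "q \<in> A \<longleftrightarrow> p \<in> A"
proof -
  have "0 < \<delta>"
    using assms(2) by (metis le_less_trans mem_ball zero_le_dist)
  then have "p \<in> ball p \<delta>"
    by simp
  then show ?thesis
    using connected_Int_frontier[OF connected_ball, of p \<delta> A] assms by blast
qed

lemma systematic_points_eq_image: "systematic_points n u = (\<lambda>k. u + real k / real n) ` {..<n}"
  by (auto simp: systematic_points_def)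

lemma sysPoisson_points_Int:
  "A \<subseteq> {0<..<1} \<Longrightarrow> sysPoisson_points w \<inter> A = range (\<lambda>i. \<Sum>j\<le>i. w j) \<inter> A"
  by (auto simp: sysPoisson_points_def)

text \<open>Moving every systematic point \<open>u + k / n\<close> by less than \<open>\<delta>\<close> changes none of the counts
  for starts \<open>u\<close> in this set.\<close>
definition safe_starts :: "nat \<Rightarrow> real set list \<Rightarrow> real \<Rightarrow> real set" where
  "safe_starts n As \<delta> = {u. \<delta> < u \<and> u < 1 / real n - \<delta> \<and>
     (\<forall>k<n. \<forall>A\<in>set As. ball (u + real k / real n) \<delta> \<inter> frontier A = {})}"

lemma safe_starts_antimono: "\<delta>' \<le> \<delta> \<Longrightarrow> safe_starts n As \<delta> \<subseteq> safe_starts n As \<delta>'"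
  unfolding safe_starts_def by (fastforce simp: disjoint_iff)

lemma partial_sums_close:
  fixes w :: "nat \<Rightarrow> real"
  assumes jumps: "\<And>j. 1 \<le> j \<Longrightarrow> j \<le> n \<Longrightarrow> \<bar>w j - 1 / real n\<bar> < \<delta> / real n"
    and \<delta>: "0 < \<delta>" and k: "k \<le> n"
  shows "\<bar>(\<Sum>j\<le>k. w j) - (w 0 + real k / real n)\<bar> < \<delta>"
proof (cases k)
  case 0
  then show ?thesis
    using \<delta> by simp
next
  case (Suc m)
  have "(\<Sum>j\<le>k. w j) - (w 0 + real k / real n) = (\<Sum>i\<le>m. w (Suc i) - 1 / real n)"
    unfolding Suc sum.atMost_Suc_shift by (simp add: sum_subtractf add_divide_distrib)
  also have "\<bar>\<dots>\<bar> \<le> (\<Sum>i\<le>m. \<bar>w (Suc i) - 1 / real n\<bar>)"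
    by (rule sum_abs)
  also have "\<dots> < (\<Sum>i\<le>m. \<delta> / real n)"
    using Suc k by (intro sum_strict_mono jumps) auto
  also have "\<dots> = real (Suc m) * \<delta> / real n"
    by simp
  also have "\<dots> \<le> \<delta>"
    using Suc k \<delta> by (simp add: divide_le_eq mult_right_mono)
  finally show ?thesis .
qed

lemma sysPoisson_points_Int_eq_image:
  fixes w :: "nat \<Rightarrow> real"
  assumes A: "A \<subseteq> {0<..<1}" and gt: "1 < (\<Sum>j\<le>n. w j)" and nonneg: "\<And>j. n < j \<Longrightarrow> 0 \<le> w j"
  shows "sysPoisson_points w \<inter> A = (\<lambda>k. \<Sum>j\<le>k. w j) ` {..<n} \<inter> A"
proof -
  define S where "S i = (\<Sum>j\<le>i. w j)" for i
  have mono: "S n \<le> S i" if "n \<le> i" for i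
  proof (rule lift_Suc_mono_le_ivl[of "{n..}" S n i])
    show "S m \<le> S (Suc m)" if "m \<in> {n..}" for m
      using that nonneg[of "Suc m"] by (simp add: S_def)
  qed (use that in auto)
  have "i < n" if "S i \<in> A" for i
  proof (rule ccontr)
    assume "\<not> i < n"
    then have "1 < S i"
      using gt mono[of i] by (simp add: S_def)
    then show False
      using that A by auto
  qed
  then have "range S \<inter> A = S ` {..<n} \<inter> A"
    by blast
  then show ?thesis
    using sysPoisson_points_Int[OF A] by (simp add: S_def)
qed

lemma card_sysPoisson_points_Int_eq:
  fixes w :: "nat \<Rightarrow> real"
  assumes start: "w 0 \<in> safe_starts n As \<delta>" and \<delta>: "0 < \<delta>"
    and jumps: "\<And>j. 1 \<le> j \<Longrightarrow> j \<le> n \<Longrightarrow> \<bar>w j - 1 / real n\<bar> < \<delta> / real n"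
    and nonneg: "\<And>j. n < j \<Longrightarrow> 0 \<le> w j"
    and A: "A \<in> set As" "A \<subseteq> {0<..<1}"
  shows "card (sysPoisson_points w \<inter> A) = card (systematic_points n (w 0) \<inter> A)"
proof -
  define S where "S i = (\<Sum>j\<le>i. w j)" for i
  define u where "u k = w 0 + real k / real n" for k
  have margins: "\<delta> < w 0" "w 0 < 1 / real n - \<delta>"
    and balls: "\<And>k. k < n \<Longrightarrow> ball (u k) \<delta> \<inter> frontier A = {}"
    using start A(1) by (auto simp: safe_starts_def u_def)
  then have n: "0 < n"
    using \<delta> by (cases n) auto
  have close: "\<bar>S k - u k\<bar> < \<delta>" if "k \<le> n" for k
    unfolding S_def u_def using partial_sums_close[OF jumps \<delta> that] .
  have "1 < S n"
    using close[of n] margins(1) n by (simp add: u_def abs_less_iff)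
  then have points: "sysPoisson_points w \<inter> A = S ` {..<n} \<inter> A"
    unfolding S_def[abs_def] using A(2) nonneg by (intro sysPoisson_points_Int_eq_image)
  have inj_S: "inj_on S {..<n}"
  proof (rule linorder_inj_onI')
    fix i j assume ij: "i \<in> {..<n}" "j \<in> {..<n}" "i < j"
    then have "1 / real n \<le> u j - u i"
      using n by (simp add: u_def divide_right_mono diff_divide_distrib[symmetric])
    then show "S i \<noteq> S j"
      using close[of i] close[of j] ij margins by (simp add: abs_less_iff)
  qed
  have inj_u: "inj_on u {..<n}"
    using n by (intro inj_onI) (simp add: u_def)
  have same: "S k \<in> A \<longleftrightarrow> u k \<in> A" if "k < n" for k
  proof (rule mem_iff_mem_if_ball_Int_frontier_empty[OF balls[OF that]])
    show "S k \<in> ball (u k) \<delta>"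
      using close[of k] that by (simp add: dist_real_def abs_minus_commute)
  qed
  have "card (sysPoisson_points w \<inter> A) = card {k \<in> {..<n}. S k \<in> A}"
    unfolding points by (rule card_image_Int_eq[OF inj_S])
  also have "\<dots> = card {k \<in> {..<n}. u k \<in> A}"
    using same by (metis (lifting) lessThan_iff)
  also have "\<dots> = card (u ` {..<n} \<inter> A)"
    by (rule card_image_Int_eq[OF inj_u, symmetric])
  also have "u ` {..<n} = systematic_points n (w 0)"
    by (auto simp: systematic_points_eq_image u_def)
  finally show ?thesis .
qed

section \<open>Measurability of the counts\<close>

lemma ex_inj_on_subset_iff_card:
  "(\<exists>J\<subseteq>I. finite J \<and> card J = m \<and> inj_on g J \<and> g ` J \<subseteq> A)
     \<longleftrightarrow> infinite (g ` I \<inter> A) \<or> m \<le> card (g ` I \<inter> A)"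
proof
  assume "\<exists>J\<subseteq>I. finite J \<and> card J = m \<and> inj_on g J \<and> g ` J \<subseteq> A"
  then obtain J where J: "J \<subseteq> I" "finite J" "card J = m" "inj_on g J" "g ` J \<subseteq> A"
    by blast
  show "infinite (g ` I \<inter> A) \<or> m \<le> card (g ` I \<inter> A)"
  proof (cases "finite (g ` I \<inter> A)")
    case True
    have "card (g ` J) \<le> card (g ` I \<inter> A)"
      using J True by (intro card_mono) auto
    then show ?thesis
      using J by (simp add: card_image)
  qed simp
next
  assume large: "infinite (g ` I \<inter> A) \<or> m \<le> card (g ` I \<inter> A)"
  obtain Y where Y: "Y \<subseteq> g ` I \<inter> A" "finite Y" "card Y = m"
  proof (cases "finite (g ` I \<inter> A)")
    case True
    then show ?thesis
      using large that obtain_subset_with_card_n by metis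
  next
    case False
    then show ?thesis
      using that infinite_arbitrarily_large by metis
  qed
  define J where "J = inv_into I g ` Y"
  have g_inv: "g (inv_into I g y) = y" if "y \<in> Y" for y
    using that Y(1) by (auto intro: f_inv_into_f)
  have "inj_on (inv_into I g) Y"
    using Y(1) by (intro inj_on_inv_into) auto
  then have "J \<subseteq> I \<and> finite J \<and> card J = m \<and> inj_on g J \<and> g ` J \<subseteq> A"
    using Y g_inv by (auto simp: J_def card_image inj_on_def inv_into_into)
  then show "\<exists>J\<subseteq>I. finite J \<and> card J = m \<and> inj_on g J \<and> g ` J \<subseteq> A"
    by blast
qed

lemma pred_card_image_Int_eq:
  fixes f :: "'i \<Rightarrow> 'a \<Rightarrow> real"
  assumes I: "countable I" and [measurable]: "\<And>i. f i \<in> borel_measurable M" "A \<in> sets borel"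
  shows "Measurable.pred M (\<lambda>\<omega>. card ((\<lambda>i. f i \<omega>) ` I \<inter> A) = k)"
proof -
  define hits where
    "hits m \<omega> \<longleftrightarrow> (\<exists>J\<subseteq>I. finite J \<and> card J = m \<and> inj_on (\<lambda>i. f i \<omega>) J \<and> (\<lambda>i. f i \<omega>) ` J \<subseteq> A)"
    for m \<omega>
  have [measurable]: "Measurable.pred M (hits m)" for m
  proof -
    let ?C = "{J. J \<subseteq> I \<and> finite J \<and> card J = m}"
    have "countable ?C"
      by (rule countable_subset[OF _ countable_Collect_finite_subset[OF I]]) auto
    moreover have "{\<omega> \<in> space M. inj_on (\<lambda>i. f i \<omega>) J \<and> (\<lambda>i. f i \<omega>) ` J \<subseteq> A} \<in> sets M"
      if "finite J" for J
      unfolding inj_on_def image_subset_iff using that by measurable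
    ultimately have "(\<Union>J\<in>?C. {\<omega> \<in> space M. inj_on (\<lambda>i. f i \<omega>) J \<and> (\<lambda>i. f i \<omega>) ` J \<subseteq> A}) \<in> sets M"
      by (intro sets.countable_UN'') auto
    moreover have "{\<omega> \<in> space M. hits m \<omega>}
        = (\<Union>J\<in>?C. {\<omega> \<in> space M. inj_on (\<lambda>i. f i \<omega>) J \<and> (\<lambda>i. f i \<omega>) ` J \<subseteq> A})"
      by (auto simp: hits_def)
    ultimately show ?thesis
      by (simp add: pred_def)
  qed
  have "card ((\<lambda>i. f i \<omega>) ` I \<inter> A) = k \<longleftrightarrow> (hits k \<omega> \<and> \<not> hits (Suc k) \<omega>) \<or> (k = 0 \<and> (\<forall>m. hits m \<omega>))"
    for \<omega>
    unfolding hits_def ex_inj_on_subset_iff_card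
    by (cases "finite ((\<lambda>i. f i \<omega>) ` I \<inter> A)")
       (auto dest: spec[of _ "Suc (card ((\<lambda>i. f i \<omega>) ` I \<inter> A))"])
  then show ?thesis
    by simp
qed

lemma pred_systematic_count[measurable]:
  "A \<in> sets borel \<Longrightarrow> Measurable.pred borel (\<lambda>u. card (systematic_points n u \<inter> A) = k)"
  unfolding systematic_points_eq_image by (rule pred_card_image_Int_eq) auto

lemma pred_systematic_points_hit_frontier[measurable]:
  "Measurable.pred borel (\<lambda>u. systematic_points n u \<inter> frontier A \<noteq> {})"
proof -
  have [measurable]: "frontier A \<in> sets borel"
    by (intro borel_closed frontier_closed)
  have "Measurable.pred borel (\<lambda>u. \<exists>k\<in>{..<n}. u + real k / real n \<in> frontier A)"
    by measurable
  then show ?thesis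
    by (simp add: systematic_points_eq_image disjoint_iff)
qed

lemma closed_Collect_ball_Int_eq_empty:
  fixes c :: "'a::real_normed_vector"
  shows "closed {u. ball (u + c) \<delta> \<inter> F = {}}"
proof -
  have "{u. ball (u + c) \<delta> \<inter> F = {}} = (\<Inter>y\<in>F. {u. \<delta> \<le> dist (u + c) y})"
    by (auto simp: disjoint_iff; meson not_less)
  also have "closed \<dots>"
    by (intro closed_INT ballI closed_Collect_le continuous_intros)
  finally show ?thesis .
qed

lemma sets_safe_starts[measurable]: "safe_starts n As \<delta> \<in> sets borel"
proof -
  have [measurable]: "Measurable.pred borel (\<lambda>u::real. ball (u + c) \<delta> \<inter> F = {})" for c F
    using borel_closed[OF closed_Collect_ball_Int_eq_empty[of c \<delta> F]] by (simp add: pred_def)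
  have "Measurable.pred borel (\<lambda>u. \<delta> < u \<and> u < 1 / real n - \<delta> \<and>
      (\<forall>k<n. \<forall>A\<in>set As. ball (u + real k / real n) \<delta> \<inter> frontier A = {}))"
    by measurable
  then show ?thesis
    by (simp add: safe_starts_def pred_def)
qed

section \<open>Probability estimates\<close>

lemma eventually_mem_safe_starts:
  assumes x: "x \<in> {0<..<1 / real n}"
    and no_hits: "\<forall>A\<in>set As. systematic_points n x \<inter> frontier A = {}"
  shows "eventually (\<lambda>\<delta>. x \<in> safe_starts n As \<delta>) (at_right 0)"
proof -
  have small: "eventually (\<lambda>\<delta>. \<delta> < e) (at_right 0)" if "0 < e" for e :: real
    using order_tendstoD(2)[OF tendsto_ident_at that] .
  have "eventually (\<lambda>\<delta>. \<forall>k\<in>{..<n}. \<forall>A\<in>set As. ball (x + real k / real n) \<delta> \<inter> frontier A = {}) (at_right 0)"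
  proof (intro eventually_ball_finite ballI finite_lessThan finite_set)
    fix k A assume "k \<in> {..<n}" "A \<in> set As"
    then have "x + real k / real n \<in> - frontier A"
      using no_hits by (auto simp: systematic_points_eq_image)
    then obtain e where e: "0 < e" "ball (x + real k / real n) e \<subseteq> - frontier A"
      using open_contains_ball[of "- frontier A"] frontier_closed by blast
    show "eventually (\<lambda>\<delta>. ball (x + real k / real n) \<delta> \<inter> frontier A = {}) (at_right 0)"
      using small[OF e(1)]
    proof eventually_elim
      case (elim \<delta>)
      then have "ball (x + real k / real n) \<delta> \<subseteq> ball (x + real k / real n) e"
        by (intro subset_ball) simp
      then show ?case
        using e(2) by blast
    qed
  qed
  moreover have "eventually (\<lambda>\<delta>. \<delta> < x \<and> \<delta> < 1 / real n - x) (at_right 0)"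
    using x by (intro eventually_conj small) auto
  ultimately show ?thesis
    by eventually_elim (auto simp: safe_starts_def)
qed

lemma prob_space_systematic_measure: "1 \<le> n \<Longrightarrow> prob_space (systematic_measure n)"
  unfolding systematic_measure_def by (intro prob_space_uniform_measure) auto

lemma AE_eventually_mem_safe_starts:
  assumes n: "1 \<le> n"
    and no_hits: "\<forall>A\<in>set As. measure (systematic_measure n)
       {u \<in> space (systematic_measure n). systematic_points n u \<inter> frontier A \<noteq> {}} = 0"
  shows "AE u in systematic_measure n. eventually (\<lambda>\<delta>. u \<in> safe_starts n As \<delta>) (at_right 0)"
proof -
  let ?\<nu> = "systematic_measure n"
  interpret prob_space ?\<nu>
    using n by (rule prob_space_systematic_measure)
  have space: "space ?\<nu> = UNIV" and sets: "sets ?\<nu> = sets borel"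
    by (simp_all add: systematic_measure_def)
  have "AE u in ?\<nu>. u \<in> {0<..<1 / real n}"
    unfolding systematic_measure_def by (rule AE_uniform_measureI) auto
  moreover have "AE u in ?\<nu>. \<forall>A\<in>set As. systematic_points n u \<inter> frontier A = {}"
  proof (rule AE_ball_countable')
    fix A assume "A \<in> set As"
    then have "{u \<in> space ?\<nu>. systematic_points n u \<inter> frontier A \<noteq> {}} \<in> null_sets ?\<nu>"
      using no_hits by (auto simp: null_sets_def emeasure_eq_measure space sets)
    from AE_not_in[OF this] show "AE u in ?\<nu>. systematic_points n u \<inter> frontier A = {}"
      by (simp add: space)
  qed (simp add: countable_finite)
  ultimately show ?thesis
    by eventually_elim (rule eventually_mem_safe_starts)
qed

lemma measure_safe_starts_tendsto_1:
  assumes n: "1 \<le> n"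
    and no_hits: "\<forall>A\<in>set As. measure (systematic_measure n)
       {u \<in> space (systematic_measure n). systematic_points n u \<inter> frontier A \<noteq> {}} = 0"
  shows "(\<lambda>p. measure (systematic_measure n) (safe_starts n As (1 / Suc p))) \<longlonglongrightarrow> 1"
proof -
  let ?\<nu> = "systematic_measure n"
  interpret prob_space ?\<nu>
    using n by (rule prob_space_systematic_measure)
  define B where "B p = safe_starts n As (1 / Suc p)" for p
  have B_sets: "range B \<subseteq> events"
    by (auto simp: B_def systematic_measure_def)
  have "incseq B"
    unfolding B_def by (intro monoI safe_starts_antimono) (simp add: frac_le)
  have lim: "filterlim (\<lambda>p. 1 / real (Suc p)) (at_right 0) sequentially"
    by (rule tendsto_imp_filterlim_at_right) (real_asymp, simp)
  have "AE u in ?\<nu>. u \<in> (\<Union>p. B p)"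
    using AE_eventually_mem_safe_starts[OF n no_hits]
  proof eventually_elim
    case (elim u)
    have "eventually (\<lambda>p. u \<in> B p) sequentially"
      unfolding B_def by (rule eventually_compose_filterlim[OF elim lim])
    then show ?case
      by (auto dest: eventually_happens)
  qed
  then have "prob (\<Union>p. B p) = 1"
    using B_sets by (subst AE_in_set_eq_1[symmetric]) auto
  moreover have "(\<lambda>p. prob (B p)) \<longlonglongrightarrow> prob (\<Union>p. B p)"
    by (rule finite_Lim_measure_incseq[OF B_sets \<open>incseq B\<close>])
  ultimately show ?thesis
    by (simp add: B_def)
qed

lemma space_sysPoisson_measure[simp]: "space (sysPoisson_measure r l) = UNIV"
proof -
  have "(\<lambda>i::nat. space (if i = 0 then forG_measure r l else gamma_measure r l)) = (\<lambda>_. UNIV)"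
    by (intro ext) simp
  then show ?thesis
    by (simp add: sysPoisson_measure_def space_PiM)
qed

lemma measurable_sysPoisson_component[measurable]:
  "(\<lambda>w. w j) \<in> borel_measurable (sysPoisson_measure r l)"
proof -
  have "(\<lambda>w. w j) \<in> measurable (sysPoisson_measure r l) (if j = 0 then forG_measure r l else gamma_measure r l)"
    unfolding sysPoisson_measure_def by (rule measurable_component_singleton) simp
  moreover have "measurable (sysPoisson_measure r l) (if j = 0 then forG_measure r l else gamma_measure r l)
      = borel_measurable (sysPoisson_measure r l)"
    by (rule measurable_cong_sets) auto
  ultimately show ?thesis
    by simp
qed

lemma prob_space_sysPoisson_measure: "r > 0 \<Longrightarrow> l > 0 \<Longrightarrow> prob_space (sysPoisson_measure r l)"
  unfolding sysPoisson_measure_def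
  by (intro prob_space_PiM) (auto intro: prob_space_gamma_measure prob_space_forG_measure)

lemma measure_sysPoisson_component:
  assumes "r > 0" "l > 0" "B \<in> sets borel"
  shows "measure (sysPoisson_measure r l) {w. w j \<in> B}
       = measure (if j = 0 then forG_measure r l else gamma_measure r l) B"
proof -
  let ?M = "\<lambda>i. if i = 0 then forG_measure r l else gamma_measure r l"
  have "distr (sysPoisson_measure r l) (?M j) (\<lambda>w. w j) = ?M j"
    unfolding sysPoisson_measure_def using assms
    by (intro distr_PiM_component) (auto intro: prob_space_gamma_measure prob_space_forG_measure)
  then have "measure (?M j) B = measure (distr (sysPoisson_measure r l) (?M j) (\<lambda>w. w j)) B"
    by simp
  also have "\<dots> = measure (sysPoisson_measure r l) ((\<lambda>w. w j) -` B \<inter> space (sysPoisson_measure r l))"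
    unfolding sysPoisson_measure_def using assms(3)
    by (intro measure_distr measurable_component_singleton) auto
  finally show ?thesis
    by (simp add: vimage_def)
qed

lemma AE_sysPoisson_jumps_nonneg:
  assumes "r > 0" "l > 0"
  shows "AE w in sysPoisson_measure r l. \<forall>j>0. 0 \<le> w j"
proof -
  interpret prob_space "sysPoisson_measure r l"
    using assms by (rule prob_space_sysPoisson_measure)
  have "(\<lambda>s. gamma_density r l s * indicator {..<0} s) = (\<lambda>_. 0)"
  proof
    show "gamma_density r l s * indicator {..<0} s = 0" for s
      by (cases "s < 0") (simp_all add: gamma_density_eq_0)
  qed
  then have "measure (gamma_measure r l) {..<0} = 0"
    using assms by (simp add: measure_gamma_measure)
  moreover have "{w \<in> space (sysPoisson_measure r l). w j \<in> {..<0}} \<in> events" for j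
    by measurable
  ultimately have null: "{w. w j \<in> {..<0}} \<in> null_sets (sysPoisson_measure r l)" if "j > 0" for j
    using that assms measure_sysPoisson_component[of r l "{..<0}" j]
    by (auto simp: null_sets_def emeasure_eq_measure)
  have "AE w in sysPoisson_measure r l. 0 < j \<longrightarrow> 0 \<le> w j" for j
  proof (cases "0 < j")
    case True
    show ?thesis
      using AE_not_in[OF null[OF True]] by eventually_elim simp
  qed simp
  then show ?thesis
    by (subst AE_all_countable) simp
qed

lemma (in finite_measure) abs_measure_diff_le_exceptional:
  assumes "S \<in> sets M" "T \<in> sets M" "N \<in> sets M"
    and "AE x in M. x \<notin> N \<longrightarrow> (x \<in> S \<longleftrightarrow> x \<in> T)"
  shows "\<bar>measure M S - measure M T\<bar> \<le> measure M N"
proof -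
  have "measure M S \<le> measure M (T \<union> N)" "measure M T \<le> measure M (S \<union> N)"
    using assms by (auto intro!: finite_measure_mono_AE elim: AE_mp)
  moreover have "measure M (T \<union> N) \<le> measure M T + measure M N"
    "measure M (S \<union> N) \<le> measure M S + measure M N"
    using assms by (auto intro!: measure_subadditive)
  ultimately show ?thesis
    by linarith
qed

lemma sets_systematic_count_event:
  assumes "\<forall>A\<in>set As. A \<in> sets borel"
  shows "{u. \<forall>j<length As. card (systematic_points n u \<inter> As ! j) = ks ! j} \<in> sets borel"
proof -
  have [measurable]: "Measurable.pred borel (\<lambda>u. card (systematic_points n u \<inter> As ! j) = ks ! j)"
    if "j < length As" for j
    using assms that by (intro pred_systematic_count) auto
  have "Measurable.pred borel (\<lambda>u. \<forall>j<length As. card (systematic_points n u \<inter> As ! j) = ks ! j)"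
    by measurable
  then show ?thesis
    by (simp add: pred_def)
qed

lemma sets_sysPoisson_count_event:
  assumes "\<forall>A\<in>set As. A \<in> sets borel \<and> A \<subseteq> {0<..<1}"
  shows "{w \<in> space (sysPoisson_measure r l). \<forall>j<length As. card (sysPoisson_points w \<inter> As ! j) = ks ! j}
     \<in> sets (sysPoisson_measure r l)"
proof -
  have [measurable]: "Measurable.pred (sysPoisson_measure r l) (\<lambda>w. card (range (\<lambda>i. \<Sum>j\<le>i. w j) \<inter> As ! j) = ks ! j)"
    if "j < length As" for j
  proof (rule pred_card_image_Int_eq)
    show "(\<lambda>w. \<Sum>j\<le>i. w j) \<in> borel_measurable (sysPoisson_measure r l)" for i
      by measurable
    show "As ! j \<in> sets borel"
      using assms that by auto
  qed simp
  have "Measurable.pred (sysPoisson_measure r l) (\<lambda>w. \<forall>j<length As. card (range (\<lambda>i. \<Sum>j\<le>i. w j) \<inter> As ! j) = ks ! j)"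
    by measurable
  moreover have "sysPoisson_points w \<inter> As ! j = range (\<lambda>i. \<Sum>j\<le>i. w j) \<inter> As ! j" if "j < length As" for w j
    using assms that by (intro sysPoisson_points_Int) auto
  ultimately show ?thesis
    by (simp add: pred_def cong: conj_cong)
qed

definition exceptional_event :: "nat \<Rightarrow> real set \<Rightarrow> real \<Rightarrow> (nat \<Rightarrow> real) set" where
  "exceptional_event n B \<delta> = {w. w 0 \<notin> B} \<union> (\<Union>j\<in>{1..n}. {w. \<delta> / n \<le> \<bar>w j - 1 / n\<bar>})"

lemma sets_exceptional_event:
  assumes [measurable]: "B \<in> sets borel"
  shows "exceptional_event n B \<delta> \<in> sets (sysPoisson_measure r l)"
proof -
  have "exceptional_event n B \<delta> = {w \<in> space (sysPoisson_measure r l). w 0 \<notin> B}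
      \<union> (\<Union>j\<in>{1..n}. {w \<in> space (sysPoisson_measure r l). \<delta> / n \<le> \<bar>w j - 1 / n\<bar>})"
    by (auto simp: exceptional_event_def)
  also have "\<dots> \<in> sets (sysPoisson_measure r l)"
    by measurable
  finally show ?thesis .
qed

lemma measure_exceptional_event_le:
  fixes r \<delta> :: real
  assumes n: "1 \<le> n" and r: "0 < r" and B: "B \<in> sets borel"
  shows "measure (sysPoisson_measure r (r * n)) (exceptional_event n B \<delta>)
    \<le> (1 - measure (forG_measure r (r * n)) B) + n * measure (gamma_measure r (r * n)) {x. \<delta> / n \<le> \<bar>x - 1 / n\<bar>}"
proof -
  let ?P = "sysPoisson_measure r (r * n)" and ?F = "forG_measure r (r * n)"
  define G where "G = {x. \<delta> / n \<le> \<bar>x - 1 / n\<bar>}"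
  have l: "0 < r * n"
    using n r by simp
  interpret P: prob_space ?P
    using r l by (rule prob_space_sysPoisson_measure)
  interpret F: prob_space ?F
    using r l by (rule prob_space_forG_measure)
  have [measurable]: "G \<in> sets borel"
    unfolding G_def by (intro borel_closed closed_Collect_le continuous_intros)
  note B[measurable]
  have "{w \<in> space ?P. w 0 \<notin> B} \<in> P.events"
    by measurable
  moreover have "{w \<in> space ?P. w j \<in> G} \<in> P.events" for j
    by measurable
  ultimately have events: "{w. w 0 \<notin> B} \<in> P.events" "{w. w j \<in> G} \<in> P.events" for j
    by simp_all
  have UN: "(\<Union>j\<in>{1..n}. {w. w j \<in> G}) \<in> P.events"
    by (intro sets.finite_UN finite_atLeastAtMost ballI events)
  have "exceptional_event n B \<delta> = {w. w 0 \<notin> B} \<union> (\<Union>j\<in>{1..n}. {w. w j \<in> G})"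
    by (auto simp: exceptional_event_def G_def)
  then have "measure ?P (exceptional_event n B \<delta>)
      \<le> measure ?P {w. w 0 \<notin> B} + measure ?P (\<Union>j\<in>{1..n}. {w. w j \<in> G})"
    using measure_subadditive[OF events(1) UN] by (simp add: P.emeasure_eq_measure)
  also have "measure ?P {w. w 0 \<notin> B} = 1 - measure ?F B"
    using measure_sysPoisson_component[of r "r * n" "- B" 0] F.prob_compl[of B] r l B
    by (simp add: Compl_eq_Diff_UNIV)
  also have "measure ?P (\<Union>j\<in>{1..n}. {w. w j \<in> G}) \<le> (\<Sum>j\<in>{1..n}. measure ?P {w. w j \<in> G})"
    using events(2) by (intro P.finite_measure_subadditive_finite) auto
  also have "\<dots> = (\<Sum>j\<in>{1..n}. measure (gamma_measure r (r * n)) G)"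
    using r l by (intro sum.cong) (simp_all add: measure_sysPoisson_component)
  finally show ?thesis
    by (simp add: G_def)
qed

lemma AE_sysPoisson_counts_eq_systematic:
  fixes r \<delta> :: real
  assumes n: "1 \<le> n" and r: "0 < r" and \<delta>: "0 < \<delta>" and As: "\<forall>A\<in>set As. A \<subseteq> {0<..<1}"
  shows "AE w in sysPoisson_measure r (r * n). w \<notin> exceptional_event n (safe_starts n As \<delta>) \<delta> \<longrightarrow>
     w 0 \<in> safe_starts n As \<delta> \<and>
     (\<forall>A\<in>set As. card (sysPoisson_points w \<inter> A) = card (systematic_points n (w 0) \<inter> A))"
proof -
  have l: "0 < r * n"
    using n r by simp
  show ?thesis
    using AE_sysPoisson_jumps_nonneg[OF r l]
  proof eventually_elim
    case (elim w)
    show ?case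
    proof
      assume "w \<notin> exceptional_event n (safe_starts n As \<delta>) \<delta>"
      then have start: "w 0 \<in> safe_starts n As \<delta>"
        and jumps: "\<And>j. 1 \<le> j \<Longrightarrow> j \<le> n \<Longrightarrow> \<bar>w j - 1 / n\<bar> < \<delta> / n"
        by (auto simp: exceptional_event_def not_le)
      moreover have "\<And>j. n < j \<Longrightarrow> 0 \<le> w j"
        using elim n by simp
      ultimately show "w 0 \<in> safe_starts n As \<delta> \<and>
          (\<forall>A\<in>set As. card (sysPoisson_points w \<inter> A) = card (systematic_points n (w 0) \<inter> A))"
        using card_sysPoisson_points_Int_eq[where w = w, OF start \<delta> jumps] As by blast
    qed
  qed
qed

lemma sysPoisson_count_estimate:
  fixes n :: nat and As :: "real set list" and ks :: "nat list" and r \<delta> :: real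
  assumes n: "1 \<le> n" and r: "0 < r" and \<delta>: "0 < \<delta>"
    and As: "\<forall>A\<in>set As. A \<in> sets borel \<and> A \<subseteq> {0<..<1}"
  defines "P \<equiv> sysPoisson_measure r (r * n)" and "F \<equiv> forG_measure r (r * n)"
    and "B \<equiv> safe_starts n As \<delta>"
    and "T \<equiv> {u. \<forall>j<length As. card (systematic_points n u \<inter> As ! j) = ks ! j}"
  shows "\<bar>measure P {w \<in> space P. \<forall>j<length As. card (sysPoisson_points w \<inter> As ! j) = ks ! j}
           - measure F (B \<inter> T)\<bar>
         \<le> (1 - measure F B) + n * measure (gamma_measure r (r * n)) {x. \<delta> / n \<le> \<bar>x - 1 / n\<bar>}"
proof -
  have l: "0 < r * n"
    using n r by simp
  interpret P: prob_space P
    unfolding P_def using r l by (rule prob_space_sysPoisson_measure)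
  have As_sub: "\<forall>A\<in>set As. A \<subseteq> {0<..<1}"
    using As by blast
  define S where "S = {w \<in> space P. \<forall>j<length As. card (sysPoisson_points w \<inter> As ! j) = ks ! j}"
  define S0 where "S0 = {w \<in> space P. w 0 \<in> B \<inter> T}"
  have [measurable]: "T \<in> sets borel"
    unfolding T_def using As by (intro sets_systematic_count_event) auto
  have B_sets[measurable]: "B \<in> sets borel"
    unfolding B_def by (rule sets_safe_starts)
  have "S \<in> P.events"
    unfolding S_def P_def using As by (rule sets_sysPoisson_count_event)
  moreover have "S0 \<in> P.events"
    unfolding S0_def P_def by measurable
  moreover have "exceptional_event n B \<delta> \<in> P.events"
    unfolding P_def using B_sets by (rule sets_exceptional_event)
  moreover have "AE w in P. w \<notin> exceptional_event n B \<delta> \<longrightarrow> (w \<in> S \<longleftrightarrow> w \<in> S0)"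
    using AE_sysPoisson_counts_eq_systematic[OF n r \<delta> As_sub, folded P_def B_def]
  proof eventually_elim
    case (elim w)
    show ?case
    proof
      assume "w \<notin> exceptional_event n B \<delta>"
      with elim have "w 0 \<in> B"
        and eq: "\<And>A. A \<in> set As \<Longrightarrow> card (sysPoisson_points w \<inter> A) = card (systematic_points n (w 0) \<inter> A)"
        by blast+
      then show "w \<in> S \<longleftrightarrow> w \<in> S0"
        by (simp add: S_def S0_def T_def eq nth_mem)
    qed
  qed
  ultimately have "\<bar>measure P S - measure P S0\<bar> \<le> measure P (exceptional_event n B \<delta>)"
    by (intro P.abs_measure_diff_le_exceptional)
  moreover have "measure P S0 = measure F (B \<inter> T)"
    using measure_sysPoisson_component[of r "r * n" "B \<inter> T" 0] r l by (simp add: S0_def P_def F_def)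
  moreover have "measure P (exceptional_event n B \<delta>)
      \<le> (1 - measure F B) + n * measure (gamma_measure r (r * n)) {x. \<delta> / n \<le> \<bar>x - 1 / n\<bar>}"
    unfolding P_def F_def by (rule measure_exceptional_event_le[OF n r B_sets])
  ultimately show ?thesis
    unfolding S_def by linarith
qed

lemma tendsto_real_by_approximation:
  fixes a :: "'i \<Rightarrow> real"
  assumes "\<And>e. 0 < e \<Longrightarrow> \<exists>g h y z. (g \<longlongrightarrow> y) F \<and> (h \<longlongrightarrow> z) F \<and> \<bar>y - x\<bar> + z < e
                                 \<and> eventually (\<lambda>i. \<bar>a i - g i\<bar> \<le> h i) F"
  shows "(a \<longlongrightarrow> x) F"
proof (rule tendstoI)
  fix e :: real
  assume "0 < e"
  then obtain g h y z where g: "(g \<longlongrightarrow> y) F" and h: "(h \<longlongrightarrow> z) F" and yz: "\<bar>y - x\<bar> + z < e"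
    and approx: "eventually (\<lambda>i. \<bar>a i - g i\<bar> \<le> h i) F"
    using assms by blast
  define d where "d = (e - (\<bar>y - x\<bar> + z)) / 2"
  have d: "0 < d"
    using yz by (simp add: d_def)
  show "eventually (\<lambda>i. dist (a i) x < e) F"
    using tendstoD[OF g d] tendstoD[OF h d] approx
  proof eventually_elim
    case (elim i)
    then show ?case
      by (simp add: dist_real_def d_def abs_if split: if_splits)
  qed
qed

lemma (in prob_space) abs_prob_Int_diff_le:
  assumes "B \<in> events" "T \<in> events"
  shows "\<bar>prob (B \<inter> T) - prob T\<bar> \<le> 1 - prob B"
proof -
  have "prob T - prob (B \<inter> T) = prob (T - B)"
    using finite_measure_Diff'[of T B] assms by (simp add: Int_commute)
  also have "\<dots> \<le> prob (space M - B)"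
    using assms by (intro finite_measure_mono) (auto dest: sets.sets_into_space)
  also have "\<dots> = 1 - prob B"
    using assms by (intro prob_compl)
  finally show ?thesis
    using finite_measure_mono[of "B \<inter> T" T] assms by auto
qed

lemma tendsto_count_estimate_bound:
  fixes \<delta> :: real
  assumes n: "1 \<le> n" and B: "B \<in> sets borel" and \<delta>: "0 < \<delta>"
  shows "((\<lambda>r::real. (1 - measure (forG_measure r (r * n)) B)
      + n * measure (gamma_measure r (r * n)) {x. \<delta> / n \<le> \<bar>x - 1 / n\<bar>})
      \<longlongrightarrow> 1 - measure (systematic_measure n) B) at_top"
proof -
  have "((\<lambda>r::real. measure (forG_measure r (r * n)) B) \<longlongrightarrow> measure (systematic_measure n) B) at_top"
    unfolding systematic_measure_def using n B by (intro tendsto_forG_measure_uniform) auto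
  moreover have "((\<lambda>r::real. measure (gamma_measure r (r * n)) {x. \<delta> / n \<le> \<bar>x - 1 / n\<bar>}) \<longlongrightarrow> 0) at_top"
    using n \<delta> by (intro gamma_measure_concentration) auto
  ultimately have "((\<lambda>r::real. (1 - measure (forG_measure r (r * n)) B)
      + n * measure (gamma_measure r (r * n)) {x. \<delta> / n \<le> \<bar>x - 1 / n\<bar>})
      \<longlongrightarrow> (1 - measure (systematic_measure n) B) + real n * 0) at_top"
    by (intro tendsto_add tendsto_diff tendsto_const tendsto_mult_left)
  then show ?thesis
    by simp
qed

lemma tendsto_sysPoisson_count_probability:
  fixes n :: nat and As :: "real set list" and ks :: "nat list"
  assumes n: "1 \<le> n" and As: "\<forall>A\<in>set As. A \<in> sets borel \<and> A \<subseteq> {0<..<1}"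
    and no_hits: "\<forall>A\<in>set As. measure (systematic_measure n)
       {u \<in> space (systematic_measure n). systematic_points n u \<inter> frontier A \<noteq> {}} = 0"
  defines "T \<equiv> {u. \<forall>j<length As. card (systematic_points n u \<inter> As ! j) = ks ! j}"
  shows "((\<lambda>r. measure (sysPoisson_measure r (r * n)) {w \<in> space (sysPoisson_measure r (r * n)).
             \<forall>j<length As. card (sysPoisson_points w \<inter> As ! j) = ks ! j})
           \<longlongrightarrow> measure (systematic_measure n) T) at_top"
proof (rule tendsto_real_by_approximation)
  fix e :: real
  assume "0 < e"
  let ?\<nu> = "systematic_measure n"
  interpret prob_space ?\<nu>
    using n by (rule prob_space_systematic_measure)
  have \<nu>: "?\<nu> = uniform_measure lborel {0<..<1 / real n}" and sets_\<nu>: "sets ?\<nu> = sets borel"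
    by (simp_all add: systematic_measure_def)
  have "eventually (\<lambda>p. 1 - e / 2 < measure ?\<nu> (safe_starts n As (1 / Suc p))) sequentially"
    using \<open>0 < e\<close> by (intro order_tendstoD(1)[OF measure_safe_starts_tendsto_1[OF n no_hits]]) simp
  then obtain p where p: "1 - e / 2 < measure ?\<nu> (safe_starts n As (1 / Suc p))"
    by (auto simp: eventually_sequentially)
  define \<delta> where "\<delta> = 1 / real (Suc p)"
  define B where "B = safe_starts n As \<delta>"
  have B: "B \<in> sets borel"
    unfolding B_def by (rule sets_safe_starts)
  have T: "T \<in> sets borel"
    unfolding T_def using As by (intro sets_systematic_count_event) auto
  have "\<bar>measure ?\<nu> (B \<inter> T) - measure ?\<nu> T\<bar> + (1 - measure ?\<nu> B) < e"
    using abs_prob_Int_diff_le[of B T] p B T by (simp add: B_def \<delta>_def sets_\<nu>)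
  moreover have "((\<lambda>r::real. measure (forG_measure r (r * n)) (B \<inter> T)) \<longlongrightarrow> measure ?\<nu> (B \<inter> T)) at_top"
    unfolding \<nu> using n B T by (intro tendsto_forG_measure_uniform) auto
  moreover have "((\<lambda>r::real. (1 - measure (forG_measure r (r * n)) B)
      + n * measure (gamma_measure r (r * n)) {x. \<delta> / n \<le> \<bar>x - 1 / n\<bar>}) \<longlongrightarrow> 1 - measure ?\<nu> B) at_top"
    using n B by (intro tendsto_count_estimate_bound) (auto simp: \<delta>_def)
  moreover have "eventually (\<lambda>r::real. \<bar>measure (sysPoisson_measure r (r * n)) {w \<in> space (sysPoisson_measure r (r * n)).
             \<forall>j<length As. card (sysPoisson_points w \<inter> As ! j) = ks ! j}
      - measure (forG_measure r (r * n)) (B \<inter> T)\<bar> \<le> (1 - measure (forG_measure r (r * n)) B)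
      + n * measure (gamma_measure r (r * n)) {x. \<delta> / n \<le> \<bar>x - 1 / n\<bar>}) at_top"
    using eventually_gt_at_top[of 0]
  proof eventually_elim
    case (elim r)
    show ?case
      using sysPoisson_count_estimate[of n r \<delta> As ks] n elim As by (simp add: B_def T_def \<delta>_def)
  qed
  ultimately show "\<exists>g h y z. (g \<longlongrightarrow> y) at_top \<and> (h \<longlongrightarrow> z) at_top \<and> \<bar>y - measure ?\<nu> T\<bar> + z < e
      \<and> eventually (\<lambda>r. \<bar>measure (sysPoisson_measure r (r * n)) {w \<in> space (sysPoisson_measure r (r * n)).
             \<forall>j<length As. card (sysPoisson_points w \<inter> As ! j) = ks ! j} - g r\<bar> \<le> h r) at_top"
    by blast
qed

theorem proposition5:
  fixes n :: nat
  assumes "n \<ge> 1"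
  shows "pp_weak_conv at_top
           (\<lambda>r::real. sysPoisson_measure r (r * real n)) (\<lambda>r. sysPoisson_points)
           (systematic_measure n) (systematic_points n)"
  unfolding pp_weak_conv_def
proof (intro allI impI)
  fix As :: "real set list" and ks :: "nat list"
  \<comment> \<open>Only indices below \<open>length As\<close> are read, so \<open>length ks = length As\<close> is not needed.\<close>
  assume "length ks = length As"
    and "\<forall>A\<in>set As. A \<in> sets borel \<and> A \<subseteq> {0<..<1} \<and> measure (systematic_measure n)
      {u \<in> space (systematic_measure n). systematic_points n u \<inter> frontier A \<noteq> {}} = 0"
  then have "\<forall>A\<in>set As. A \<in> sets borel \<and> A \<subseteq> {0<..<1}"
    and "\<forall>A\<in>set As. measure (systematic_measure n)
      {u \<in> space (systematic_measure n). systematic_points n u \<inter> frontier A \<noteq> {}} = 0"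
    by blast+
  from tendsto_sysPoisson_count_probability[OF assms this, of ks]
  show "((\<lambda>r. measure (sysPoisson_measure r (r * n)) {w \<in> space (sysPoisson_measure r (r * n)).
          \<forall>j<length As. card (sysPoisson_points w \<inter> As ! j) = ks ! j})
        \<longlongrightarrow> measure (systematic_measure n) {u \<in> space (systematic_measure n).
          \<forall>j<length As. card (systematic_points n u \<inter> As ! j) = ks ! j}) at_top"
    by (simp add: systematic_measure_def)
qed

end
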